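(* Fix a node $p$ with $N_p\ge1$ neighbors, integers $d\ge1$, $B_p\ge1$, constants $C^R>0$, $\rho>0$, $\eta>0$, a privacy parameter $\alpha>0$, and fixed vectors $\lambda\in\mathbb{R}^d$ and $a_i\in\mathbb{R}^d$ for $i\in\mathcal{N}_p$ (not depending on the dataset; in the algorithm $a_i=\frac12(f_p(t)+V_i(t)-\epsilon_p(t))$). For a dataset $D_p=((x_j,y_j))_{j=1}^{B_p}$ let $$g(D_p)=\arg\min_{f\in\mathbb{R}^d}\ \frac{C^R}{B_p}\sum_{j=1}^{B_p}\mathcal{L}(y_jf^Tx_j)+\rho R(f)+2\lambda^Tf+\eta\sum_{i\in\mathcal{N}_p}\|f-a_i\|^2,$$ and release $V=g(D_p)+\epsilon$, where $\epsilon\in\mathbb{R}^d$ is drawn independently with density proportional to $e^{-\zeta\|\epsilon\|}$, $\zeta=\frac{\rho B_p\alpha}{2C^R}$. Then for any two neighboring datasets $D_p,D_p'$, the densities $Q(\cdot\mid D_p)$, $Q(\cdot\mid D'_p)$ of $V$ satisfy $\frac{Q(v\mid D_p)}{Q(v\mid D_p')}\le e^{\alpha}$ for all $v\in\mathbb{R}^d$.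
   Context: Data points satisfy $x_j\in\mathbb{R}^d$ with $\|x_j\|\le 1$ (Euclidean norm) and $y_j\in\{-1,1\}$. The loss $\mathcal{L}:\mathbb{R}\to\mathbb{R}$ is convex and differentiable with $|\mathcal{L}'|\le1$. The regularizer $R:\mathbb{R}^d\to\mathbb{R}$ is continuously differentiable and 1-strongly convex. Two datasets of the same size $B_p$ are neighboring if they differ in exactly one data point. *)

theory Defs
  imports "HOL-Analysis.Analysis"
begin

definition strongly_convex_with :: "real \<Rightarrow> ('a::real_normed_vector \<Rightarrow> real) \<Rightarrow> bool" where
  "strongly_convex_with m R \<longleftrightarrow>
     (\<forall>x y t. 0 \<le> t \<and> t \<le> 1 \<longrightarrow>
        R (t *\<^sub>R x + (1 - t) *\<^sub>R y) \<le> t * R x + (1 - t) * R y - m / 2 * t * (1 - t) * (norm (x - y))\<^sup>2)"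

definition objective ::
  "real \<Rightarrow> real \<Rightarrow> real \<Rightarrow> (real \<Rightarrow> real) \<Rightarrow> ('a::euclidean_space \<Rightarrow> real) \<Rightarrow> 'a \<Rightarrow> 'b set \<Rightarrow> ('b \<Rightarrow> 'a)
    \<Rightarrow> nat \<Rightarrow> (nat \<Rightarrow> 'a) \<Rightarrow> (nat \<Rightarrow> real) \<Rightarrow> 'a \<Rightarrow> real" where
  "objective CR \<rho> \<eta> L R lam Np a B x y f =
     CR / real B * (\<Sum>j<B. L (y j * (f \<bullet> x j))) + \<rho> * R f + 2 * (lam \<bullet> f)
     + \<eta> * (\<Sum>i\<in>Np. (norm (f - a i))\<^sup>2)"

definition g_min ::
  "real \<Rightarrow> real \<Rightarrow> real \<Rightarrow> (real \<Rightarrow> real) \<Rightarrow> ('a::euclidean_space \<Rightarrow> real) \<Rightarrow> 'a \<Rightarrow> 'b set \<Rightarrow> ('b \<Rightarrow> 'a)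
    \<Rightarrow> nat \<Rightarrow> (nat \<Rightarrow> 'a) \<Rightarrow> (nat \<Rightarrow> real) \<Rightarrow> 'a" where
  "g_min CR \<rho> \<eta> L R lam Np a B x y =
     (THE f. \<forall>f'. objective CR \<rho> \<eta> L R lam Np a B x y f \<le> objective CR \<rho> \<eta> L R lam Np a B x y f')"

definition noise_density :: "real \<Rightarrow> 'a::euclidean_space \<Rightarrow> real" where
  "noise_density \<zeta> e =
     exp (- \<zeta> * norm e) / (\<integral>u. exp (- \<zeta> * norm (u::'a)) \<partial>lborel)"

definition release_density ::
  "real \<Rightarrow> real \<Rightarrow> real \<Rightarrow> real \<Rightarrow> (real \<Rightarrow> real) \<Rightarrow> ('a::euclidean_space \<Rightarrow> real) \<Rightarrow> 'a \<Rightarrow> 'b set \<Rightarrow> ('b \<Rightarrow> 'a)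
    \<Rightarrow> nat \<Rightarrow> (nat \<Rightarrow> 'a) \<Rightarrow> (nat \<Rightarrow> real) \<Rightarrow> 'a \<Rightarrow> real" where
  "release_density \<zeta> CR \<rho> \<eta> L R lam Np a B x y v =
     noise_density \<zeta> (v - g_min CR \<rho> \<eta> L R lam Np a B x y)"

definition neighboring :: "nat \<Rightarrow> (nat \<Rightarrow> 'a) \<Rightarrow> (nat \<Rightarrow> real) \<Rightarrow> (nat \<Rightarrow> 'a) \<Rightarrow> (nat \<Rightarrow> real) \<Rightarrow> bool" where
  "neighboring B x y x' y' \<longleftrightarrow>
     (\<exists>k<B. (x k, y k) \<noteq> (x' k, y' k) \<and> (\<forall>j<B. j \<noteq> k \<longrightarrow> x j = x' j \<and> y j = y' j))"

definition valid_dataset :: "nat \<Rightarrow> (nat \<Rightarrow> 'a::real_normed_vector) \<Rightarrow> (nat \<Rightarrow> real) \<Rightarrow> bool" where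
  "valid_dataset B x y \<longleftrightarrow> (\<forall>j<B. norm (x j) \<le> 1 \<and> (y j = -1 \<or> y j = 1))"

end

theory Submission
  imports Defs
begin

text \<open>The regularized objective is \<rho>-strongly convex and coercive, so it has a unique
  minimizer g, and every f satisfies J g + \<rho>/2 \<parallel>f - g\<parallel>^2 \<le> J f. For neighboring datasets the
  two objectives differ only in one loss term, so their difference is (2 C^R / B)-Lipschitz;
  adding the quadratic-growth inequalities at the two minimizers gives
  \<parallel>g - g'\<parallel> \<le> 2 C^R / (\<rho> B). By the triangle inequality the ratio of the shifted noise
  densities is at most exp (\<zeta> \<parallel>g - g'\<parallel>) \<le> exp \<alpha>.\<close>

lemma strongly_convex_withD:
  assumes "strongly_convex_with m R" "0 \<le> t" "t \<le> 1"
  shows "R (t *\<^sub>R x + (1 - t) *\<^sub>R y) \<le> t * R x + (1 - t) * R y - m / 2 * t * (1 - t) * (norm (x - y))\<^sup>2"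
  using assms unfolding strongly_convex_with_def by blast

lemma strongly_convex_with_cmul:
  assumes "c \<ge> 0" and "strongly_convex_with m R"
  shows "strongly_convex_with (c * m) (\<lambda>x. c * R x)"
  unfolding strongly_convex_with_def
proof (intro allI impI)
  fix x y and t :: real assume t: "0 \<le> t \<and> t \<le> 1"
  have "c * R (t *\<^sub>R x + (1 - t) *\<^sub>R y)
        \<le> c * (t * R x + (1 - t) * R y - m / 2 * t * (1 - t) * (norm (x - y))\<^sup>2)"
    using strongly_convex_withD[OF assms(2)] t assms(1) by (intro mult_left_mono) auto
  then show "c * R (t *\<^sub>R x + (1 - t) *\<^sub>R y)
        \<le> t * (c * R x) + (1 - t) * (c * R y) - c * m / 2 * t * (1 - t) * (norm (x - y))\<^sup>2"
    by (simp add: algebra_simps)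
qed

lemma strongly_convex_with_add_convex:
  assumes "convex_on UNIV f" and "strongly_convex_with m g"
  shows "strongly_convex_with m (\<lambda>x. f x + g x)"
  unfolding strongly_convex_with_def
proof (intro allI impI)
  fix x y and t :: real assume t: "0 \<le> t \<and> t \<le> 1"
  have "f (t *\<^sub>R x + (1 - t) *\<^sub>R y) \<le> t * f x + (1 - t) * f y"
    using assms(1) t unfolding convex_on_def by auto
  then show "f (t *\<^sub>R x + (1 - t) *\<^sub>R y) + g (t *\<^sub>R x + (1 - t) *\<^sub>R y)
        \<le> t * (f x + g x) + (1 - t) * (f y + g y) - m / 2 * t * (1 - t) * (norm (x - y))\<^sup>2"
    using strongly_convex_withD[OF assms(2), of t x y] t by (simp add: algebra_simps)
qed

lemma strongly_convex_with_imp_convex: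
  assumes "m \<ge> 0" and "strongly_convex_with m R"
  shows "convex_on UNIV R"
  unfolding convex_on_def
proof (intro conjI ballI allI impI)
  fix x y and u v :: real assume uv: "0 \<le> u" "0 \<le> v" "u + v = 1"
  then have "v = 1 - u" "u \<le> 1" by auto
  then have "R (u *\<^sub>R x + v *\<^sub>R y) \<le> u * R x + v * R y - m / 2 * u * v * (norm (x - y))\<^sup>2"
    using strongly_convex_withD[OF assms(2), of u x y] uv(1) by simp
  also have "\<dots> \<le> u * R x + v * R y"
    using assms(1) uv by simp
  finally show "R (u *\<^sub>R x + v *\<^sub>R y) \<le> u * R x + v * R y" .
qed simp

text \<open>If the gap \<delta> = J f - J g were smaller than d = m/2 times the squared distance,
  strong convexity at the point of the segment with weight t = (1 - \<delta>/d)/2 on f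
  would put J strictly below J g there.\<close>
lemma strongly_convex_with_minimizer_gap:
  assumes m: "m > 0" and sc: "strongly_convex_with m J" and min: "\<forall>f. J g \<le> J f"
  shows "J g + m / 2 * (norm (f - g))\<^sup>2 \<le> J f"
proof (rule ccontr)
  define d where "d = m / 2 * (norm (f - g))\<^sup>2"
  define \<delta> where "\<delta> = J f - J g"
  assume "\<not> ?thesis"
  then have "\<delta> < d" unfolding d_def \<delta>_def by simp
  moreover have "\<delta> \<ge> 0" using min unfolding \<delta>_def by auto
  ultimately have d_pos: "d > 0" by linarith
  define t where "t = (1 - \<delta> / d) / 2"
  have t: "0 < t" "t \<le> 1"
    using \<open>\<delta> < d\<close> \<open>\<delta> \<ge> 0\<close> d_pos unfolding t_def by (auto simp: field_simps)
  have "J g \<le> J (t *\<^sub>R f + (1 - t) *\<^sub>R g)" using min by auto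
  also have "\<dots> \<le> t * J f + (1 - t) * J g - t * (1 - t) * d"
    using strongly_convex_withD[OF sc, of t f g] t unfolding d_def by (simp add: algebra_simps)
  finally have "t * ((1 - t) * d) \<le> t * \<delta>" unfolding \<delta>_def by (simp add: algebra_simps)
  then have "(1 - t) * d \<le> \<delta>" using t by simp
  moreover have "(1 - t) * d = (d + \<delta>) / 2"
    using d_pos unfolding t_def by (simp add: field_simps)
  ultimately show False using \<open>\<delta> < d\<close> by simp
qed

lemma strongly_convex_with_minimizer_unique:
  assumes "m > 0" and "strongly_convex_with m J"
    and "\<forall>f. J g \<le> J f" and "\<forall>f. J h \<le> J f"
  shows "h = g"
proof -
  have "J h + m / 2 * (norm (g - h))\<^sup>2 \<le> J g"
    by (rule strongly_convex_with_minimizer_gap[OF assms(1,2,4)])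
  moreover have "J g \<le> J h" using assms(3) by simp
  ultimately have "m * (norm (g - h))\<^sup>2 \<le> 0" by simp
  then have "(norm (g - h))\<^sup>2 \<le> 0" using assms(1) by (simp add: mult_le_0_iff)
  then show ?thesis by simp
qed

lemma strongly_convex_with_THE_minimizer:
  fixes J :: "'a::euclidean_space \<Rightarrow> real"
  assumes m: "m > 0" and sc: "strongly_convex_with m J" and cont: "continuous_on UNIV J"
    and coercive: "\<And>f. norm f \<ge> r \<Longrightarrow> J 0 < J f"
  shows "\<forall>f. J (THE g. \<forall>f. J g \<le> J f) \<le> J f"
proof -
  have "continuous_on (cball 0 \<bar>r\<bar>) J" using cont by (rule continuous_on_subset) simp
  then obtain g where g: "g \<in> cball 0 \<bar>r\<bar>" "\<forall>f\<in>cball 0 \<bar>r\<bar>. J g \<le> J f"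
    using continuous_attains_inf[of "cball 0 \<bar>r\<bar>" J] by auto
  have "J g \<le> J f" for f
  proof (cases "norm f \<le> \<bar>r\<bar>")
    case False
    then have "J 0 < J f" by (intro coercive) simp
    moreover have "J g \<le> J 0" using g by simp
    ultimately show ?thesis by simp
  qed (use g in simp)
  then have "\<exists>!g. \<forall>f. J g \<le> J f"
    using strongly_convex_with_minimizer_unique[OF m sc] by blast
  then show ?thesis by (rule theI')
qed

lemma strongly_convex_with_minimizers_dist:
  assumes m: "m > 0" and sc1: "strongly_convex_with m J1" and sc2: "strongly_convex_with m J2"
    and min1: "\<forall>f. J1 g1 \<le> J1 f" and min2: "\<forall>f. J2 g2 \<le> J2 f"
    and K: "K \<ge> 0" and lipschitz: "\<And>u w. (J1 u - J2 u) - (J1 w - J2 w) \<le> K * norm (u - w)"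
  shows "norm (g1 - g2) \<le> K / m"
proof -
  have "J1 g1 + m / 2 * (norm (g1 - g2))\<^sup>2 \<le> J1 g2"
    using strongly_convex_with_minimizer_gap[OF m sc1 min1, of g2] by (simp add: norm_minus_commute)
  moreover have "J2 g2 + m / 2 * (norm (g1 - g2))\<^sup>2 \<le> J2 g1"
    by (rule strongly_convex_with_minimizer_gap[OF m sc2 min2])
  moreover have "(J1 g2 - J2 g2) - (J1 g1 - J2 g1) \<le> K * norm (g1 - g2)"
    using lipschitz[of g2 g1] by (simp add: norm_minus_commute)
  ultimately have "norm (g1 - g2) * (m * norm (g1 - g2)) \<le> norm (g1 - g2) * K"
    by (simp add: power2_eq_square algebra_simps)
  then have "m * norm (g1 - g2) \<le> K"
    using K m by (cases "g1 = g2") (auto simp: mult_le_cancel_left_pos)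
  with m show ?thesis by (simp add: field_simps)
qed

lemma convex_on_sum_fun:
  assumes "finite I" and "convex S" and "\<And>i. i \<in> I \<Longrightarrow> convex_on S (f i)"
  shows "convex_on S (\<lambda>x. \<Sum>i\<in>I. f i x)"
  using assms(1,3)
  by (induction I rule: finite_induct) (auto simp: convex_on_const assms(2))

lemma convex_on_compose_affine:
  assumes "convex_on UNIV L" and "linear l"
  shows "convex_on UNIV (\<lambda>x. L (c + l x))"
  unfolding convex_on_def
proof (intro conjI ballI allI impI)
  fix x y and u v :: real assume uv: "0 \<le> u" "0 \<le> v" "u + v = 1"
  have "c + l (u *\<^sub>R x + v *\<^sub>R y) = u *\<^sub>R (c + l x) + v *\<^sub>R (c + l y)"
    using uv(3) by (simp add: linear_add[OF assms(2)] linear_scale[OF assms(2)] algebra_simps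
        flip: scaleR_add_left)
  then show "L (c + l (u *\<^sub>R x + v *\<^sub>R y)) \<le> u * L (c + l x) + v * L (c + l y)"
    using assms(1) uv unfolding convex_on_def by simp
qed simp

lemma convex_on_compose_linear:
  assumes "convex_on UNIV L" and "linear l"
  shows "convex_on UNIV (\<lambda>x. L (l x))"
  using convex_on_compose_affine[OF assms, of 0] by simp

lemma convex_on_linear:
  fixes h :: "'a::real_vector \<Rightarrow> real"
  assumes "linear h"
  shows "convex_on UNIV h"
  using convex_on_compose_linear[of "\<lambda>t. t" h] assms by (simp add: convex_on_ident)

lemma convex_on_norm_diff_power2:
  fixes c :: "'a::real_normed_vector"
  shows "convex_on UNIV (\<lambda>x. (norm (x - c))\<^sup>2)"
  unfolding convex_on_def
proof (intro conjI ballI allI impI)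
  fix x y and u v :: real assume uv: "0 \<le> u" "0 \<le> v" "u + v = 1"
  then have "u = 1 - v" by simp
  have "u *\<^sub>R (x - c) + v *\<^sub>R (y - c) = u *\<^sub>R x + v *\<^sub>R y - (u + v) *\<^sub>R c"
    by (simp add: algebra_simps)
  then have "u *\<^sub>R x + v *\<^sub>R y - c = u *\<^sub>R (x - c) + v *\<^sub>R (y - c)"
    using uv(3) by simp
  then have "norm (u *\<^sub>R x + v *\<^sub>R y - c) \<le> u * norm (x - c) + v * norm (y - c)"
    using norm_triangle_ineq[of "u *\<^sub>R (x - c)" "v *\<^sub>R (y - c)"] uv by simp
  then have "(norm (u *\<^sub>R x + v *\<^sub>R y - c))\<^sup>2 \<le> (u * norm (x - c) + v * norm (y - c))\<^sup>2"
    by (rule power_mono) simp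
  also have "\<dots> \<le> u * (norm (x - c))\<^sup>2 + v * (norm (y - c))\<^sup>2"
    using convex_onD[OF convex_power2, of v "norm (x - c)" "norm (y - c)"] uv
    by (simp add: \<open>u = 1 - v\<close>)
  finally show "(norm (u *\<^sub>R x + v *\<^sub>R y - c))\<^sup>2 \<le> u * (norm (x - c))\<^sup>2 + v * (norm (y - c))\<^sup>2" .
qed simp

lemma convex_on_above_tangent:
  fixes R :: "'a::real_normed_vector \<Rightarrow> real"
  assumes convex: "convex_on UNIV R" and deriv: "(R has_derivative D) (at z)"
  shows "R z + D (f - z) \<le> R f"
proof -
  define \<phi> where "\<phi> t = R (z + t *\<^sub>R (f - z))" for t :: real
  have "convex_on UNIV \<phi>"
    unfolding \<phi>_def
    by (intro convex_on_compose_affine convex linearI) (auto simp: algebra_simps)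
  moreover have "((\<lambda>t. z + t *\<^sub>R (f - z)) has_derivative (\<lambda>t. t *\<^sub>R (f - z))) (at 0)"
    by (auto intro!: derivative_eq_intros)
  then have "(\<phi> has_derivative (\<lambda>t. D (t *\<^sub>R (f - z)))) (at 0)"
    unfolding \<phi>_def using has_derivative_compose[of _ _ 0 UNIV R D] deriv by fastforce
  then have "(\<phi> has_field_derivative D (f - z)) (at 0)"
    using has_derivative_linear[OF deriv]
    by (simp add: has_field_derivative_def linear_scale mult.commute[of _ "D (f - z)"])
  ultimately have "\<phi> 1 - \<phi> 0 \<ge> D (f - z) * (1 - 0)"
    by (intro convex_on_imp_above_tangent) auto
  then show ?thesis unfolding \<phi>_def by simp
qed

lemma abs_diff_le_of_deriv_bound:
  fixes L :: "real \<Rightarrow> real"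
  assumes "\<And>t. L differentiable (at t)" and "\<And>t. \<bar>deriv L t\<bar> \<le> M"
  shows "\<bar>L s - L t\<bar> \<le> M * \<bar>s - t\<bar>"
  using field_differentiable_bound[of UNIV L "deriv L" M s t] assms
  by (auto simp: DERIV_deriv_iff_real_differentiable)

lemma quadratic_minorant_imp_coercive:
  fixes J :: "'a::real_normed_vector \<Rightarrow> real"
  assumes \<eta>: "\<eta> > 0" and K: "K \<ge> 0"
    and minorant: "\<And>f. \<eta> * (norm (f - c))\<^sup>2 - K * norm f + D \<le> J f"
  obtains r where "\<And>f. norm f \<ge> r \<Longrightarrow> J 0 < J f"
proof
  define N where "N = \<bar>J 0\<bar> + \<bar>D\<bar> + K * norm c + 1"
  fix f :: 'a assume f: "norm c + max 1 ((K + N) / \<eta>) \<le> norm f"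
  define s where "s = norm f - norm c"
  have "s \<ge> 1" "(K + N) / \<eta> \<le> s" using f unfolding s_def by auto
  then have "\<eta> * s \<ge> K + N" using \<eta> by (simp add: field_simps)
  have "s \<le> norm (f - c)" using norm_triangle_ineq2[of f c] unfolding s_def by simp
  then have "\<eta> * s * s \<le> \<eta> * (norm (f - c))\<^sup>2"
    using \<open>s \<ge> 1\<close> \<eta> by (simp add: power2_eq_square mult_mono)
  moreover have "(K + N) * s \<le> \<eta> * s * s"
    using \<open>s \<ge> 1\<close> \<open>\<eta> * s \<ge> K + N\<close> by (simp add: mult_right_mono)
  moreover have "N \<le> N * s"
    using \<open>s \<ge> 1\<close> K mult_left_mono[of 1 s N] unfolding N_def by simp
  moreover have "K * norm f = K * s + K * norm c" unfolding s_def by (simp add: algebra_simps)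
  ultimately show "J 0 < J f"
    using minorant[of f] unfolding N_def by (simp add: algebra_simps)
qed

lemma loss_term_lipschitz:
  fixes L :: "real \<Rightarrow> real" and x :: "'a::real_inner"
  assumes "\<And>t. L differentiable (at t)" and "\<And>t. \<bar>deriv L t\<bar> \<le> 1"
    and "\<bar>y\<bar> \<le> 1" and "norm x \<le> 1"
  shows "\<bar>L (y * (u \<bullet> x)) - L (y * (w \<bullet> x))\<bar> \<le> norm (u - w)"
proof -
  have "\<bar>L (y * (u \<bullet> x)) - L (y * (w \<bullet> x))\<bar> \<le> \<bar>y\<bar> * \<bar>(u - w) \<bullet> x\<bar>"
    using abs_diff_le_of_deriv_bound[OF assms(1,2), of "y * (u \<bullet> x)" "y * (w \<bullet> x)"]
    by (simp add: inner_diff_left abs_mult flip: right_diff_distrib)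
  also have "\<dots> \<le> 1 * (norm (u - w) * 1)"
    using assms(3,4)
    by (intro mult_mono order.trans[OF Cauchy_Schwarz_ineq2] mult_left_le) auto
  finally show ?thesis by simp
qed

lemma strongly_convex_objective:
  fixes L :: "real \<Rightarrow> real" and R :: "'a::euclidean_space \<Rightarrow> real"
  assumes L_convex: "convex_on UNIV L" and R_sc: "strongly_convex_with 1 R"
    and "CR \<ge> 0" and "\<rho> \<ge> 0" and "\<eta> \<ge> 0" and "finite Np"
  shows "strongly_convex_with \<rho> (objective CR \<rho> \<eta> L R lam Np a B x y)"
proof -
  have loss: "convex_on UNIV (\<lambda>f. L (y j * (f \<bullet> x j)))" for j
    by (intro convex_on_compose_linear[OF L_convex] linearI) (auto simp: inner_add_left algebra_simps)
  have linear_term: "convex_on UNIV (\<lambda>f. 2 * (lam \<bullet> f))"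
    by (intro convex_on_linear linearI) (auto simp: inner_add_right algebra_simps)
  have "convex_on UNIV (\<lambda>f. CR / real B * (\<Sum>j<B. L (y j * (f \<bullet> x j))) + 2 * (lam \<bullet> f)
      + \<eta> * (\<Sum>i\<in>Np. (norm (f - a i))\<^sup>2))"
    using assms(3,5,6)
    by (intro convex_on_add convex_on_cmul convex_on_sum_fun loss linear_term
        convex_on_norm_diff_power2) auto
  moreover have "strongly_convex_with \<rho> (\<lambda>f. \<rho> * R f)"
    using strongly_convex_with_cmul[OF assms(4) R_sc] by simp
  ultimately have "strongly_convex_with \<rho> (\<lambda>f. (CR / real B * (\<Sum>j<B. L (y j * (f \<bullet> x j)))
      + 2 * (lam \<bullet> f) + \<eta> * (\<Sum>i\<in>Np. (norm (f - a i))\<^sup>2)) + \<rho> * R f)"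
    by (rule strongly_convex_with_add_convex)
  moreover have "objective CR \<rho> \<eta> L R lam Np a B x y = (\<lambda>f. (CR / real B * (\<Sum>j<B. L (y j * (f \<bullet> x j)))
      + 2 * (lam \<bullet> f) + \<eta> * (\<Sum>i\<in>Np. (norm (f - a i))\<^sup>2)) + \<rho> * R f)"
    by (simp add: fun_eq_iff objective_def)
  ultimately show ?thesis by simp
qed

lemma objective_lower_bound:
  fixes L :: "real \<Rightarrow> real" and R :: "'a::euclidean_space \<Rightarrow> real"
    and R' :: "'a \<Rightarrow> 'a \<Rightarrow>\<^sub>L real"
  assumes L_diff: "\<And>t. L differentiable (at t)" and L_deriv_bound: "\<And>t. \<bar>deriv L t\<bar> \<le> 1"
    and R_deriv: "(R has_derivative blinfun_apply (R' 0)) (at 0)"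
    and R_sc: "strongly_convex_with 1 R"
    and "finite Np" and "i \<in> Np" and "B \<ge> 1"
    and "CR \<ge> 0" and "\<rho> \<ge> 0" and "\<eta> \<ge> 0"
    and D_valid: "valid_dataset B x y"
  shows "\<eta> * (norm (f - a i))\<^sup>2 - (CR + \<rho> * norm (R' 0) + 2 * norm lam) * norm f
           + (CR * L 0 + \<rho> * R 0)
         \<le> objective CR \<rho> \<eta> L R lam Np a B x y f"
proof -
  have "(\<Sum>j<B. L 0 - norm f) \<le> (\<Sum>j<B. L (y j * (f \<bullet> x j)))"
  proof (rule sum_mono)
    fix j assume "j \<in> {..<B}"
    then have "\<bar>y j\<bar> \<le> 1" "norm (x j) \<le> 1" using D_valid unfolding valid_dataset_def by auto
    then show "L 0 - norm f \<le> L (y j * (f \<bullet> x j))"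
      using loss_term_lipschitz[OF L_diff L_deriv_bound, of "y j" "x j" f 0] by simp
  qed
  then have "CR / real B * (real B * (L 0 - norm f)) \<le> CR / real B * (\<Sum>j<B. L (y j * (f \<bullet> x j)))"
    using \<open>CR \<ge> 0\<close> by (intro mult_left_mono) auto
  then have loss: "CR * L 0 - CR * norm f \<le> CR / real B * (\<Sum>j<B. L (y j * (f \<bullet> x j)))"
    using \<open>B \<ge> 1\<close> by (simp add: algebra_simps)
  have "R 0 - norm (R' 0) * norm f \<le> R f"
    using convex_on_above_tangent[OF strongly_convex_with_imp_convex[OF _ R_sc] R_deriv, of f]
      norm_blinfun[of "R' 0" f] by simp
  then have reg: "\<rho> * R 0 - \<rho> * norm (R' 0) * norm f \<le> \<rho> * R f"
    using mult_left_mono[OF _ \<open>\<rho> \<ge> 0\<close>] by (fastforce simp: algebra_simps)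
  have lin: "- 2 * norm lam * norm f \<le> 2 * (lam \<bullet> f)"
    using Cauchy_Schwarz_ineq2[of lam f] by linarith
  have "(norm (f - a i))\<^sup>2 \<le> (\<Sum>i\<in>Np. (norm (f - a i))\<^sup>2)"
    using assms(5,6) by (intro member_le_sum) auto
  then have prox: "\<eta> * (norm (f - a i))\<^sup>2 \<le> \<eta> * (\<Sum>i\<in>Np. (norm (f - a i))\<^sup>2)"
    using \<open>\<eta> \<ge> 0\<close> by (rule mult_left_mono)
  show ?thesis unfolding objective_def using loss reg lin prox by (simp add: algebra_simps)
qed

lemma continuous_on_objective:
  fixes L :: "real \<Rightarrow> real" and R :: "'a::euclidean_space \<Rightarrow> real"
  assumes "\<And>t. isCont L t" and "\<And>z. isCont R z"
  shows "continuous_on UNIV (objective CR \<rho> \<eta> L R lam Np a B x y)"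
  unfolding objective_def
  by (intro continuous_at_imp_continuous_on ballI continuous_intros isCont_o2[OF _ assms(1)]
      isCont_o2[OF _ assms(2)])

lemma g_min_minimizes:
  fixes L :: "real \<Rightarrow> real" and R :: "'a::euclidean_space \<Rightarrow> real"
    and R' :: "'a \<Rightarrow> 'a \<Rightarrow>\<^sub>L real"
  assumes L_convex: "convex_on UNIV L"
    and L_diff: "\<And>t. L differentiable (at t)" and L_deriv_bound: "\<And>t. \<bar>deriv L t\<bar> \<le> 1"
    and R_deriv: "\<And>z. (R has_derivative blinfun_apply (R' z)) (at z)"
    and R_sc: "strongly_convex_with 1 R"
    and "finite Np" and "Np \<noteq> {}" and "B \<ge> 1"
    and "CR \<ge> 0" and "\<rho> > 0" and "\<eta> > 0"
    and D_valid: "valid_dataset B x y"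
  shows "objective CR \<rho> \<eta> L R lam Np a B x y (g_min CR \<rho> \<eta> L R lam Np a B x y)
           \<le> objective CR \<rho> \<eta> L R lam Np a B x y f"
proof -
  obtain i where "i \<in> Np" using \<open>Np \<noteq> {}\<close> by blast
  have cont: "continuous_on UNIV (objective CR \<rho> \<eta> L R lam Np a B x y)"
    using L_diff R_deriv
    by (intro continuous_on_objective) (auto simp: differentiable_imp_continuous_within
        intro: has_derivative_continuous)
  moreover have "\<eta> * (norm (f - a i))\<^sup>2 - (CR + \<rho> * norm (R' 0) + 2 * norm lam) * norm f
      + (CR * L 0 + \<rho> * R 0) \<le> objective CR \<rho> \<eta> L R lam Np a B x y f" for f
    using assms(6,8-12) \<open>i \<in> Np\<close>
    by (intro objective_lower_bound[where R'=R', OF L_diff L_deriv_bound R_deriv[of 0] R_sc]) auto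
  moreover have "CR + \<rho> * norm (R' 0) + 2 * norm lam \<ge> 0"
    using \<open>CR \<ge> 0\<close> \<open>\<rho> > 0\<close> by simp
  ultimately obtain r where "\<And>f. norm f \<ge> r \<Longrightarrow>
      objective CR \<rho> \<eta> L R lam Np a B x y 0 < objective CR \<rho> \<eta> L R lam Np a B x y f"
    using quadratic_minorant_imp_coercive[OF \<open>\<eta> > 0\<close>] by metis
  then show ?thesis
    unfolding g_min_def using strongly_convex_objective[OF L_convex R_sc] cont assms(6-11)
    by (blast intro: strongly_convex_with_THE_minimizer[rule_format] less_imp_le)
qed

lemma objective_diff_neighboring:
  assumes "k < B" and "\<And>j. j < B \<Longrightarrow> j \<noteq> k \<Longrightarrow> x j = x' j \<and> y j = y' j"
  shows "objective CR \<rho> \<eta> L R lam Np a B x y u - objective CR \<rho> \<eta> L R lam Np a B x' y' u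
         = CR / real B * (L (y k * (u \<bullet> x k)) - L (y' k * (u \<bullet> x' k)))"
proof -
  have "objective CR \<rho> \<eta> L R lam Np a B x y u - objective CR \<rho> \<eta> L R lam Np a B x' y' u
        = CR / real B * (\<Sum>j<B. L (y j * (u \<bullet> x j)) - L (y' j * (u \<bullet> x' j)))"
    unfolding objective_def by (simp add: sum_subtractf algebra_simps)
  also have "(\<Sum>j<B. L (y j * (u \<bullet> x j)) - L (y' j * (u \<bullet> x' j)))
        = (\<Sum>j\<in>{k}. L (y j * (u \<bullet> x j)) - L (y' j * (u \<bullet> x' j)))"
    using assms by (intro sum.mono_neutral_right) auto
  finally show ?thesis by simp
qed

lemma objective_diff_neighboring_lipschitz:
  fixes L :: "real \<Rightarrow> real" and x x' :: "nat \<Rightarrow> 'a::euclidean_space"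
  assumes L_diff: "\<And>t. L differentiable (at t)" and L_deriv_bound: "\<And>t. \<bar>deriv L t\<bar> \<le> 1"
    and "valid_dataset B x y" and "valid_dataset B x' y'" and "neighboring B x y x' y'"
    and "CR \<ge> 0"
  shows "(objective CR \<rho> \<eta> L R lam Np a B x y u - objective CR \<rho> \<eta> L R lam Np a B x' y' u)
         - (objective CR \<rho> \<eta> L R lam Np a B x y w - objective CR \<rho> \<eta> L R lam Np a B x' y' w)
         \<le> 2 * CR / real B * norm (u - w)"
proof -
  obtain k where k: "k < B" and same: "\<And>j. j < B \<Longrightarrow> j \<noteq> k \<Longrightarrow> x j = x' j \<and> y j = y' j"
    using \<open>neighboring B x y x' y'\<close> unfolding neighboring_def by blast
  have "\<bar>y k\<bar> \<le> 1" "norm (x k) \<le> 1" "\<bar>y' k\<bar> \<le> 1" "norm (x' k) \<le> 1"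
    using assms(3,4) k unfolding valid_dataset_def by auto
  then have "(L (y k * (u \<bullet> x k)) - L (y' k * (u \<bullet> x' k)))
             - (L (y k * (w \<bullet> x k)) - L (y' k * (w \<bullet> x' k))) \<le> 2 * norm (u - w)"
    using loss_term_lipschitz[OF L_diff L_deriv_bound, of "y k" "x k" u w]
      loss_term_lipschitz[OF L_diff L_deriv_bound, of "y' k" "x' k" u w] by linarith
  then have bound: "CR / real B * ((L (y k * (u \<bullet> x k)) - L (y' k * (u \<bullet> x' k)))
             - (L (y k * (w \<bullet> x k)) - L (y' k * (w \<bullet> x' k)))) \<le> CR / real B * (2 * norm (u - w))"
    using \<open>CR \<ge> 0\<close> by (intro mult_left_mono) auto
  have diff: "objective CR \<rho> \<eta> L R lam Np a B x y v - objective CR \<rho> \<eta> L R lam Np a B x' y' v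
      = CR / real B * (L (y k * (v \<bullet> x k)) - L (y' k * (v \<bullet> x' k)))" for v
    by (rule objective_diff_neighboring[OF k same])
  show ?thesis unfolding diff using bound by (simp add: algebra_simps)
qed

lemma g_min_neighboring_dist:
  fixes L :: "real \<Rightarrow> real" and R :: "'a::euclidean_space \<Rightarrow> real"
    and R' :: "'a \<Rightarrow> 'a \<Rightarrow>\<^sub>L real"
  assumes L_convex: "convex_on UNIV L"
    and L_diff: "\<And>t. L differentiable (at t)" and L_deriv_bound: "\<And>t. \<bar>deriv L t\<bar> \<le> 1"
    and R_deriv: "\<And>z. (R has_derivative blinfun_apply (R' z)) (at z)"
    and R_sc: "strongly_convex_with 1 R"
    and "finite Np" and "Np \<noteq> {}" and "B \<ge> 1"
    and "CR \<ge> 0" and "\<rho> > 0" and "\<eta> > 0"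
    and "valid_dataset B x y" and "valid_dataset B x' y'" and "neighboring B x y x' y'"
  shows "norm (g_min CR \<rho> \<eta> L R lam Np a B x y - g_min CR \<rho> \<eta> L R lam Np a B x' y')
         \<le> 2 * CR / (\<rho> * real B)"
proof -
  let ?J = "objective CR \<rho> \<eta> L R lam Np a B x y" and ?J' = "objective CR \<rho> \<eta> L R lam Np a B x' y'"
  have "norm (g_min CR \<rho> \<eta> L R lam Np a B x y - g_min CR \<rho> \<eta> L R lam Np a B x' y')
        \<le> (2 * CR / real B) / \<rho>"
  proof (rule strongly_convex_with_minimizers_dist)
    show "strongly_convex_with \<rho> ?J" "strongly_convex_with \<rho> ?J'"
      using assms(6,9,10,11) by (auto intro: strongly_convex_objective[OF L_convex R_sc])
    show "\<forall>f. ?J (g_min CR \<rho> \<eta> L R lam Np a B x y) \<le> ?J f"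
      "\<forall>f. ?J' (g_min CR \<rho> \<eta> L R lam Np a B x' y') \<le> ?J' f"
      using assms(6-13) by (auto intro: g_min_minimizes[OF L_convex L_diff L_deriv_bound R_deriv R_sc])
    show "(?J u - ?J' u) - (?J w - ?J' w) \<le> 2 * CR / real B * norm (u - w)" for u w
      using assms(12-14,9) by (rule objective_diff_neighboring_lipschitz[OF L_diff L_deriv_bound])
  qed (use assms(9,10) in auto)
  then show ?thesis by (simp add: field_simps)
qed

text \<open>The normalizing integral cancels; were it 0, both densities would be 0 by the
  convention x / 0 = 0 and the ratio trivially bounded.\<close>
lemma noise_density_ratio_le:
  fixes g g' v :: "'a::euclidean_space"
  assumes "\<zeta> \<ge> 0"
  shows "noise_density \<zeta> (v - g) / noise_density \<zeta> (v - g') \<le> exp (\<zeta> * norm (g - g'))"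
proof -
  define Z where "Z = (\<integral>u. exp (- \<zeta> * norm (u::'a)) \<partial>lborel)"
  have "norm (v - g') - norm (v - g) \<le> norm (g - g')"
    using norm_triangle_ineq[of "v - g" "g - g'"] by simp
  then have "\<zeta> * norm (v - g') - \<zeta> * norm (v - g) \<le> \<zeta> * norm (g - g')"
    using mult_left_mono[OF _ assms] by (simp flip: right_diff_distrib)
  then have "exp (- \<zeta> * norm (v - g)) / exp (- \<zeta> * norm (v - g')) \<le> exp (\<zeta> * norm (g - g'))"
    by (simp flip: exp_diff)
  then show ?thesis
    unfolding noise_density_def Z_def[symmetric] by (cases "Z = 0") auto
qed

theorem theorem2:
  fixes L :: "real \<Rightarrow> real" and R :: "'a::euclidean_space \<Rightarrow> real"
    and R' :: "'a \<Rightarrow> 'a \<Rightarrow>\<^sub>L real"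
    and lam :: 'a and Np :: "'b set" and a :: "'b \<Rightarrow> 'a"
    and B :: nat and CR \<rho> \<eta> \<alpha> :: real
    and x x' :: "nat \<Rightarrow> 'a" and y y' :: "nat \<Rightarrow> real" and v :: 'a
  assumes L_convex: "convex_on UNIV L"
    and L_diff: "\<And>t. L differentiable (at t)"
    and L_deriv_bound: "\<And>t. \<bar>deriv L t\<bar> \<le> 1"
    and R_deriv: "\<And>z. (R has_derivative blinfun_apply (R' z)) (at z)"
    and R'_cont: "continuous_on UNIV R'"
    and R_sc: "strongly_convex_with 1 R"
    and Np_fin: "finite Np" and Np_card: "card Np \<ge> 1"
    and B_pos: "B \<ge> 1"
    and CR_pos: "CR > 0" and rho_pos: "\<rho> > 0" and eta_pos: "\<eta> > 0" and alpha_pos: "\<alpha> > 0"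
    and D_valid: "valid_dataset B x y"
    and D'_valid: "valid_dataset B x' y'"
    and nb: "neighboring B x y x' y'"
  shows "release_density (\<rho> * real B * \<alpha> / (2 * CR)) CR \<rho> \<eta> L R lam Np a B x y v
         / release_density (\<rho> * real B * \<alpha> / (2 * CR)) CR \<rho> \<eta> L R lam Np a B x' y' v
         \<le> exp \<alpha>"
proof -
  define \<zeta> where "\<zeta> = \<rho> * real B * \<alpha> / (2 * CR)"
  define g where "g = g_min CR \<rho> \<eta> L R lam Np a B x y"
  define g' where "g' = g_min CR \<rho> \<eta> L R lam Np a B x' y'"
  have "Np \<noteq> {}" using Np_card by auto
  then have "norm (g - g') \<le> 2 * CR / (\<rho> * real B)"
    unfolding g_def g'_def using Np_fin B_pos CR_pos rho_pos eta_pos D_valid D'_valid nb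
    by (intro g_min_neighboring_dist[OF L_convex L_diff L_deriv_bound R_deriv R_sc]) auto
  then have "\<zeta> * norm (g - g') \<le> \<zeta> * (2 * CR / (\<rho> * real B))"
    using rho_pos alpha_pos CR_pos by (intro mult_left_mono) (auto simp: \<zeta>_def)
  also have "\<dots> = \<alpha>" using rho_pos CR_pos B_pos by (simp add: \<zeta>_def field_simps)
  finally have "exp (\<zeta> * norm (g - g')) \<le> exp \<alpha>" by simp
  moreover have "\<zeta> \<ge> 0" using rho_pos alpha_pos CR_pos by (simp add: \<zeta>_def)
  ultimately show ?thesis
    unfolding release_density_def \<zeta>_def[symmetric] g_def[symmetric] g'_def[symmetric]
    using noise_density_ratio_le[of \<zeta> v g g'] by linarith
qed

end
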